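(* The algebra $\mathcal{O}_{nc}(\mathrm{GL}_2)$ has a $k$-basis consisting of the elements $\delta^{x_0}w_1\delta^{x_1}w_2\cdots w_n\delta^{x_n}$ ($n\ge0$) where $x_i\in\mathbb{Z}$, $x_i\ne0$ for $0<i<n$, each $w_i$ is a non-empty word in $a,b,c,d$ with non-decreasing row index (no letter from $\{c,d\}$ is followed by a letter from $\{a,b\}$), and whenever $x_i=-1$ with $0<i<n$, the letter immediately to the left of $\delta^{-1}$ and the letter immediately to the right of it have non-decreasing column index (i.e. the pair is not (letter of $\{b,d\}$, letter of $\{a,c\}$)).
   Context: $\mathcal{O}_{nc}(\mathrm{GL}_2)$ is the $k$-algebra generated by $a,b,c,d,\delta,\delta^{-1}$ subject to $ac=ca$, $bd=db$, $ad-cb=\delta=da-bc$, $\delta\delta^{-1}=1=\delta^{-1}\delta$, $a\delta^{-1}d-b\delta^{-1}c=1=d\delta^{-1}a-c\delta^{-1}b$, $b\delta^{-1}a=a\delta^{-1}b$, $c\delta^{-1}d=d\delta^{-1}c$. Row index: $a,b$ have row index 1 and $c,d$ row index 2; column index: $a,c$ have column index 1 and $b,d$ column index 2 (entries of the matrix $\begin{pmatrix}a&b\\c&d\end{pmatrix}$). *)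

theory Defs
  imports Main
begin

text \<open>Generators of the free algebra: a, b, c, d, delta, delta inverse.\<close>
datatype gen = La | Lb | Lc | Ld | Dl | Dli

type_synonym word = "gen list"

text \<open>Elements of the free k-algebra on gen: finitely supported functions word => k.
  A formal linear combination is given as a list of (coefficient, word).\<close>
definition lincomb :: "('k::field \<times> word) list \<Rightarrow> word \<Rightarrow> 'k" where
  "lincomb ps w = (\<Sum>(c, x)\<leftarrow>ps. if x = w then c else 0)"

definition sandw :: "word \<Rightarrow> ('k \<times> word) list \<Rightarrow> word \<Rightarrow> ('k \<times> word) list" where
  "sandw u r v = map (\<lambda>(e, x). (e, u @ x @ v)) r"

text \<open>Defining relations of O_nc(GL_2), each written as an element r meaning r = 0.\<close>
definition rels :: "('k::field \<times> word) list set" where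
  "rels = {
     [(1, [La, Lc]), (-1, [Lc, La])],
     [(1, [Lb, Ld]), (-1, [Ld, Lb])],
     [(1, [La, Ld]), (-1, [Lc, Lb]), (-1, [Dl])],
     [(1, [Ld, La]), (-1, [Lb, Lc]), (-1, [Dl])],
     [(1, [Dl, Dli]), (-1, [])],
     [(1, [Dli, Dl]), (-1, [])],
     [(1, [La, Dli, Ld]), (-1, [Lb, Dli, Lc]), (-1, [])],
     [(1, [Ld, Dli, La]), (-1, [Lc, Dli, Lb]), (-1, [])],
     [(1, [Lb, Dli, La]), (-1, [La, Dli, Lb])],
     [(1, [Lc, Dli, Ld]), (-1, [Ld, Dli, Lc])] }"

text \<open>The two-sided ideal generated by the relations (as a subset of the free algebra):
  the k-span of all u * r * v with u, v words and r a relation.\<close>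
inductive_set rel_ideal :: "(word \<Rightarrow> 'k::field) set" where
  zero: "(\<lambda>_. 0) \<in> rel_ideal"
| step: "f \<in> rel_ideal \<Longrightarrow> r \<in> rels \<Longrightarrow>
          (\<lambda>w. f w + c * lincomb (sandw u r v) w) \<in> rel_ideal"

definition supp :: "(word \<Rightarrow> 'k::zero) \<Rightarrow> word set" where
  "supp f = {w. f w \<noteq> 0}"

fun row :: "gen \<Rightarrow> nat" where
  "row La = 1" | "row Lb = 1" | "row Lc = 2" | "row Ld = 2" | "row Dl = 0" | "row Dli = 0"

fun col :: "gen \<Rightarrow> nat" where
  "col La = 1" | "col Lc = 1" | "col Lb = 2" | "col Ld = 2" | "col Dl = 0" | "col Dli = 0"

definition delpow :: "int \<Rightarrow> word" where
  "delpow x = (if 0 \<le> x then replicate (nat x) Dl else replicate (nat (- x)) Dli)"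

definition good_word :: "word \<Rightarrow> bool" where
  "good_word w \<longleftrightarrow> w \<noteq> [] \<and> set w \<subseteq> {La, Lb, Lc, Ld} \<and>
     (\<forall>i. Suc i < length w \<longrightarrow> row (w ! i) \<le> row (w ! Suc i))"

text \<open>The word delta^x0 w1 delta^x1 ... wn delta^xn, with ps = [(w1,x1),...,(wn,xn)].\<close>
definition nf_word :: "int \<Rightarrow> (word \<times> int) list \<Rightarrow> word" where
  "nf_word x0 ps = delpow x0 @ concat (map (\<lambda>(w, x). w @ delpow x) ps)"

definition nf_data :: "(word \<times> int) list \<Rightarrow> bool" where
  "nf_data ps \<longleftrightarrow> (\<forall>j < length ps. good_word (fst (ps ! j))) \<and>
     (\<forall>j. Suc j < length ps \<longrightarrow> snd (ps ! j) \<noteq> 0 \<and>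
        (snd (ps ! j) = -1 \<longrightarrow>
           col (last (fst (ps ! j))) \<le> col (hd (fst (ps ! Suc j)))))"

definition normal_words :: "word set" where
  "normal_words = {nf_word x0 ps | x0 ps. nf_data ps}"

end

theory Submission
  imports Defs
begin

text \<open>We use Bergman's diamond lemma. Order words by length and then
  lexicographically with \<open>a < b < c < d < \<delta> < \<delta>\<^sup>-\<^sup>1\<close>. Each defining relation becomes a rewriting
  rule replacing its largest word, so the rules rewrite
  \<open>ca, db, cb, da, \<delta>\<delta>\<^sup>-\<^sup>1, \<delta>\<^sup>-\<^sup>1\<delta>, b\<delta>\<^sup>-\<^sup>1c, d\<delta>\<^sup>-\<^sup>1a, b\<delta>\<^sup>-\<^sup>1a, d\<delta>\<^sup>-\<^sup>1c\<close>, and the words containing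
  none of these as a factor are exactly the normal words of the statement. Rewriting shows that
  the normal words span modulo the ideal. For independence, write an element of the ideal as a
  combination of terms \<open>u r v\<close> and look at the largest leading word occurring: if the element is
  supported on normal words, the terms with that leading word can be merged into one with
  coefficient zero, at the cost of smaller terms. Merging needs every ambiguity to resolve:
  disjoint ones always do, there are no inclusions among the leading words, and each of the ten
  overlaps is resolved by an explicit certificate.\<close>

section \<open>Word order\<close>

fun letter_code :: "gen \<Rightarrow> nat" where
  "letter_code La = 1" | "letter_code Lb = 2" | "letter_code Lc = 3" | "letter_code Ld = 4"
| "letter_code Dl = 5" | "letter_code Dli = 6"

text \<open>Reading a word as a base-7 numeral compares words by length first and then
  lexicographically; this is the order of the diamond lemma.\<close>

fun word_code :: "word \<Rightarrow> nat" where
  "word_code [] = 0"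
| "word_code (x # xs) = letter_code x * 7 ^ length xs + word_code xs"

lemma letter_code_bounds: "1 \<le> letter_code x" "letter_code x \<le> 6"
  by (cases x; simp)+

lemma letter_code_inject: "letter_code x = letter_code y \<longleftrightarrow> x = y"
  by (cases x; cases y; simp)

lemma word_code_append: "word_code (xs @ ys) = word_code xs * 7 ^ length ys + word_code ys"
  by (induction xs) (auto simp: algebra_simps power_add)

lemma word_code_less: "word_code xs < 7 ^ length xs"
proof (induction xs)
  case (Cons x xs)
  have "word_code (x # xs) < (letter_code x + 1) * 7 ^ length xs"
    using Cons by simp
  also have "\<dots> \<le> 7 * 7 ^ length xs"
    using letter_code_bounds(2)[of x] by (intro mult_right_mono) auto
  finally show ?case by simp
qed simp

lemma word_code_ge: "xs \<noteq> [] \<Longrightarrow> 7 ^ (length xs - 1) \<le> word_code xs"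
  using letter_code_bounds(1) by (cases xs) (auto simp: trans_le_add1)

lemma word_code_less_if_shorter:
  assumes "length xs < length ys"
  shows "word_code xs < word_code ys"
proof -
  have "word_code xs < 7 ^ length xs" by (rule word_code_less)
  also have "\<dots> \<le> 7 ^ (length ys - 1)" using assms by (intro power_increasing) auto
  also have "\<dots> \<le> word_code ys" using assms by (intro word_code_ge) auto
  finally show ?thesis .
qed

lemma word_code_inject_same_length:
  "length xs = length ys \<Longrightarrow> word_code xs = word_code ys \<Longrightarrow> xs = ys"
proof (induction xs arbitrary: ys)
  case (Cons x xs)
  then obtain y ys' where ys: "ys = y # ys'" and len: "length ys' = length xs"
    by (cases ys) auto
  let ?n = "7 ^ length xs"
  have eq: "letter_code x * ?n + word_code xs = letter_code y * ?n + word_code ys'"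
    using Cons.prems ys len by simp
  have "letter_code x = (letter_code x * ?n + word_code xs) div ?n"
    using word_code_less[of xs] by simp
  also have "\<dots> = letter_code y"
    using eq word_code_less[of ys'] len by simp
  finally have "x = y" by (simp add: letter_code_inject)
  with eq Cons.IH len ys show ?case by simp
qed simp

lemma word_code_inject: "word_code xs = word_code ys \<longleftrightarrow> xs = ys"
  by (metis word_code_inject_same_length word_code_less_if_shorter nat_neq_iff)

lemma word_code_append_mono_strict:
  assumes "word_code w < word_code w'"
  shows "word_code (u @ w @ v) < word_code (u @ w' @ v)"
proof -
  have "word_code (u @ w) < word_code (u @ w')"
  proof (cases "length w = length w'")
    case True
    then show ?thesis using assms by (simp add: word_code_append)
  next
    case False
    then have "length w < length w'"
      using assms word_code_less_if_shorter[of w' w] by linarith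
    then show ?thesis by (intro word_code_less_if_shorter) simp
  qed
  then show ?thesis
    using word_code_append[of "u @ w" v] word_code_append[of "u @ w'" v] by simp
qed

lemma word_code_append_mono:
  "word_code w \<le> word_code w' \<Longrightarrow> word_code (u @ w @ v) \<le> word_code (u @ w' @ v)"
  using word_code_append_mono_strict[of w w' u v] word_code_inject[of w w'] by (cases "w = w'") auto

definition R1 :: "('k::field \<times> word) list" where "R1 = [(1, [La, Lc]), (-1, [Lc, La])]"

definition R2 :: "('k::field \<times> word) list" where "R2 = [(1, [Lb, Ld]), (-1, [Ld, Lb])]"

definition R3 :: "('k::field \<times> word) list" where "R3 = [(1, [La, Ld]), (-1, [Lc, Lb]), (-1, [Dl])]"

definition R4 :: "('k::field \<times> word) list" where "R4 = [(1, [Ld, La]), (-1, [Lb, Lc]), (-1, [Dl])]"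

definition R5 :: "('k::field \<times> word) list" where "R5 = [(1, [Dl, Dli]), (-1, [])]"

definition R6 :: "('k::field \<times> word) list" where "R6 = [(1, [Dli, Dl]), (-1, [])]"

definition R7 :: "('k::field \<times> word) list" where "R7 = [(1, [La, Dli, Ld]), (-1, [Lb, Dli, Lc]), (-1, [])]"

definition R8 :: "('k::field \<times> word) list" where "R8 = [(1, [Ld, Dli, La]), (-1, [Lc, Dli, Lb]), (-1, [])]"

definition R9 :: "('k::field \<times> word) list" where "R9 = [(1, [Lb, Dli, La]), (-1, [La, Dli, Lb])]"

definition R10 :: "('k::field \<times> word) list" where "R10 = [(1, [Lc, Dli, Ld]), (-1, [Ld, Dli, Lc])]"

lemmas R_defs = R1_def R2_def R3_def R4_def R5_def R6_def R7_def R8_def R9_def R10_def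

lemma rels_eq: "rels = {R1, R2, R3, R4, R5, R6, R7, R8, R9, R10}"
  by (simp add: rels_def R_defs)

definition lead_word :: "('k \<times> word) list \<Rightarrow> word" where
  "lead_word r = foldr (\<lambda>p w. if word_code w < word_code (snd p) then snd p else w) r []"

definition lead_coeff :: "('k::field \<times> word) list \<Rightarrow> 'k" where
  "lead_coeff r = lincomb r (lead_word r)"

lemma lead_word_R:
  "lead_word R1 = [Lc, La]" "lead_word R2 = [Ld, Lb]" "lead_word R3 = [Lc, Lb]"
  "lead_word R4 = [Ld, La]" "lead_word R5 = [Dl, Dli]" "lead_word R6 = [Dli, Dl]"
  "lead_word R7 = [Lb, Dli, Lc]" "lead_word R8 = [Ld, Dli, La]" "lead_word R9 = [Lb, Dli, La]"
  "lead_word R10 = [Ld, Dli, Lc]"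
  by (simp_all add: lead_word_def R_defs)

lemma lead_coeff_R:
  "lead_coeff R1 = -1" "lead_coeff R2 = -1" "lead_coeff R3 = -1" "lead_coeff R4 = 1"
  "lead_coeff R5 = 1" "lead_coeff R6 = 1" "lead_coeff R7 = -1" "lead_coeff R8 = 1"
  "lead_coeff R9 = 1" "lead_coeff R10 = -1"
  by (simp_all add: lead_coeff_def lead_word_R) (simp_all add: lincomb_def R_defs)

lemma lead_coeff_nonzero: "r \<in> rels \<Longrightarrow> lead_coeff r \<noteq> 0"
  by (auto simp: rels_eq lead_coeff_R)

lemma word_code_less_lead_word:
  "r \<in> rels \<Longrightarrow> (e, x) \<in> set r \<Longrightarrow> x \<noteq> lead_word r \<Longrightarrow> word_code x < word_code (lead_word r)"
  by (auto simp: rels_eq lead_word_R) (auto simp: R_defs)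

lemma word_code_le_lead_word:
  "r \<in> rels \<Longrightarrow> (e, x) \<in> set r \<Longrightarrow> word_code x \<le> word_code (lead_word r)"
  using word_code_less_lead_word by fastforce

lemma lead_word_prefix_unique:
  "r1 \<in> rels \<Longrightarrow> r2 \<in> rels \<Longrightarrow> lead_word r1 @ v1 = lead_word r2 @ v2 \<Longrightarrow> r1 = r2"
  by (auto simp: rels_eq lead_word_R)

lemma lead_word_not_inner_factor:
  "r1 \<in> rels \<Longrightarrow> r2 \<in> rels \<Longrightarrow> m \<noteq> [] \<Longrightarrow> lead_word r1 \<noteq> m @ lead_word r2 @ s"
  by (auto simp: rels_eq lead_word_R Cons_eq_append_conv append_eq_Cons_conv)

definition forbidden_pair :: "gen \<Rightarrow> gen \<Rightarrow> bool" where
  "forbidden_pair x y \<longleftrightarrow>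
     (x \<in> {Lc, Ld} \<and> y \<in> {La, Lb}) \<or> (x = Dl \<and> y = Dli) \<or> (x = Dli \<and> y = Dl)"

definition forbidden_triple :: "gen \<Rightarrow> gen \<Rightarrow> gen \<Rightarrow> bool" where
  "forbidden_triple x y z \<longleftrightarrow> x \<in> {Lb, Ld} \<and> y = Dli \<and> z \<in> {La, Lc}"

fun reduced :: "word \<Rightarrow> bool" where
  "reduced (x # y # z # w) \<longleftrightarrow>
     \<not> forbidden_pair x y \<and> \<not> forbidden_triple x y z \<and> reduced (y # z # w)"
| "reduced [x, y] \<longleftrightarrow> \<not> forbidden_pair x y"
| "reduced [x] \<longleftrightarrow> True"
| "reduced [] \<longleftrightarrow> True"

lemma reduced_Cons:
  "reduced (x # w) \<longleftrightarrow> reduced w \<and>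
     (case w of [] \<Rightarrow> True
      | y # w' \<Rightarrow> \<not> forbidden_pair x y \<and> (case w' of [] \<Rightarrow> True | z # _ \<Rightarrow> \<not> forbidden_triple x y z))"
  by (cases w rule: reduced.cases) auto

lemma forbidden_pair_lead_word:
  "forbidden_pair x y \<Longrightarrow> \<exists>r \<in> (rels :: ('k::field \<times> word) list set). lead_word r = [x, y]"
  by (auto simp: forbidden_pair_def rels_eq lead_word_R)

lemma forbidden_triple_lead_word:
  "forbidden_triple x y z \<Longrightarrow> \<exists>r \<in> (rels :: ('k::field \<times> word) list set). lead_word r = [x, y, z]"
  by (auto simp: forbidden_triple_def rels_eq lead_word_R)

lemma reduced_no_lead_word:
  "reduced w \<Longrightarrow> r \<in> rels \<Longrightarrow> w \<noteq> u @ lead_word r @ v"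
proof (induction u arbitrary: w)
  case Nil
  then show ?case
    by (auto simp: rels_eq lead_word_R reduced_Cons forbidden_pair_def forbidden_triple_def)
next
  case (Cons x u)
  then show ?case using Cons.IH[of "u @ lead_word r @ v"] by (auto simp: reduced_Cons)
qed

lemma not_reduced_lead_word:
  "\<not> reduced w \<Longrightarrow> \<exists>u v (r :: ('k::field \<times> word) list). r \<in> rels \<and> w = u @ lead_word r @ v"
proof (induction w rule: reduced.induct)
  case (1 x y z w)
  consider "forbidden_pair x y" | "forbidden_triple x y z" | "\<not> reduced (y # z # w)"
    using "1.prems" by auto
  then show ?case
  proof cases
    case 1
    then obtain r :: "('k \<times> word) list" where "r \<in> rels" "lead_word r = [x, y]"
      using forbidden_pair_lead_word by blast
    then show ?thesis by (intro exI[of _ "[]"] exI[of _ "z # w"] exI[of _ r]) simp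
  next
    case 2
    then obtain r :: "('k \<times> word) list" where "r \<in> rels" "lead_word r = [x, y, z]"
      using forbidden_triple_lead_word by blast
    then show ?thesis by (intro exI[of _ "[]"] exI[of _ w] exI[of _ r]) simp
  next
    case 3
    then obtain u v and r :: "('k \<times> word) list" where "r \<in> rels" "y # z # w = u @ lead_word r @ v"
      using "1.IH" by blast
    then show ?thesis by (intro exI[of _ "x # u"] exI[of _ v] exI[of _ r]) simp
  qed
next
  case (2 x y)
  then obtain r :: "('k \<times> word) list" where "r \<in> rels" "lead_word r = [x, y]"
    using forbidden_pair_lead_word by fastforce
  then show ?case by (intro exI[of _ "[]"] exI[of _ "[]"] exI[of _ r]) simp
qed auto

section \<open>Reduced words are the normal words\<close>

lemma successively_conv_nth:
  "successively P xs \<longleftrightarrow> (\<forall>i. Suc i < length xs \<longrightarrow> P (xs ! i) (xs ! Suc i))"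
  by (induction P xs rule: successively.induct) (auto simp: less_Suc_eq_0_disj)

lemma good_word_iff_successively:
  "good_word w \<longleftrightarrow> w \<noteq> [] \<and> set w \<subseteq> {La, Lb, Lc, Ld} \<and> successively (\<lambda>x y. row x \<le> row y) w"
  by (simp add: good_word_def successively_conv_nth)

lemma nf_data_iff_successively:
  "nf_data ps \<longleftrightarrow> (\<forall>p \<in> set ps. good_word (fst p)) \<and>
     successively (\<lambda>p q. snd p \<noteq> 0 \<and> (snd p = -1 \<longrightarrow> col (last (fst p)) \<le> col (hd (fst q)))) ps"
  by (simp add: nf_data_def successively_conv_nth all_set_conv_all_nth)

lemma nf_word_Nil: "nf_word x0 [] = delpow x0"
  by (simp add: nf_word_def)

lemma nf_word_Cons: "nf_word x0 ((w, x) # ps) = delpow x0 @ w @ nf_word x ps"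
  by (simp add: nf_word_def)

lemma nf_data_Nil: "nf_data []"
  by (simp add: nf_data_def)

lemma nf_data_Cons:
  "nf_data ((w, x) # ps) \<longleftrightarrow> good_word w \<and> nf_data ps \<and>
     (ps \<noteq> [] \<longrightarrow> x \<noteq> 0 \<and> (x = -1 \<longrightarrow> col (last w) \<le> col (hd (fst (hd ps)))))"
  by (auto simp: nf_data_iff_successively successively_Cons)

definition letter :: "gen \<Rightarrow> bool" where
  "letter g \<longleftrightarrow> g \<in> {La, Lb, Lc, Ld}"

lemma good_word_single: "good_word [g] \<longleftrightarrow> letter g"
  by (simp add: good_word_def letter_def)

lemma good_word_Cons:
  "w \<noteq> [] \<Longrightarrow> good_word (g # w) \<longleftrightarrow> letter g \<and> good_word w \<and> row g \<le> row (hd w)"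
  by (auto simp: good_word_iff_successively successively_Cons letter_def)

lemma good_word_hd: "good_word w \<Longrightarrow> w \<noteq> [] \<and> letter (hd w)"
  by (cases w) (auto simp: good_word_def letter_def)

lemma good_word_last: "good_word w \<Longrightarrow> letter (last w)"
  unfolding good_word_def letter_def using last_in_set by blast

lemma delpow_0: "delpow 0 = []"
  by (simp add: delpow_def)

lemma delpow_pos:
  assumes "x > 0"
  shows "delpow x = Dl # delpow (x - 1)"
proof -
  have "nat x = Suc (nat (x - 1))" using assms by arith
  then show ?thesis using assms by (simp add: delpow_def)
qed

lemma delpow_neg:
  assumes "x < 0"
  shows "delpow x = Dli # delpow (x + 1)"
proof -
  have "nat (- x) = Suc (nat (- (x + 1)))" using assms by arith
  then show ?thesis using assms by (cases "x = -1") (simp_all add: delpow_def)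
qed

lemma delta_Cons_nf_word:
  assumes g: "g = Dl \<or> g = Dli" and red: "reduced (g # nf_word y0 qs)"
  shows "\<exists>y. g # nf_word y0 qs = nf_word y qs"
  using g
proof
  assume "g = Dl"
  moreover have "\<not> y0 < 0"
  proof
    assume "y0 < 0"
    then have "nf_word y0 qs = Dli # nf_word (y0 + 1) qs" by (simp add: nf_word_def delpow_neg)
    then show False using red \<open>g = Dl\<close> by (simp add: reduced_Cons forbidden_pair_def)
  qed
  ultimately have "g # nf_word y0 qs = nf_word (y0 + 1) qs" by (simp add: nf_word_def delpow_pos)
  then show ?thesis by blast
next
  assume "g = Dli"
  moreover have "\<not> y0 > 0"
  proof
    assume "y0 > 0"
    then have "nf_word y0 qs = Dl # nf_word (y0 - 1) qs" by (simp add: nf_word_def delpow_pos)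
    then show False using red \<open>g = Dli\<close> by (simp add: reduced_Cons forbidden_pair_def)
  qed
  ultimately have "g # nf_word y0 qs = nf_word (y0 - 1) qs" by (simp add: nf_word_def delpow_neg)
  then show ?thesis by blast
qed

lemma letter_Cons_nf_word:
  assumes g: "letter g" and red: "reduced (g # nf_word y0 qs)" and qs: "nf_data qs"
  shows "\<exists>ps. g # nf_word y0 qs = nf_word 0 ps \<and> nf_data ps"
proof (cases "y0 = 0 \<and> qs \<noteq> []")
  case True
  then obtain w1 x1 qs' where qs_eq: "qs = (w1, x1) # qs'" by (metis list.exhaust prod.exhaust)
  have d: "good_word w1" "nf_data qs'"
    "qs' \<noteq> [] \<longrightarrow> x1 \<noteq> 0 \<and> (x1 = -1 \<longrightarrow> col (last w1) \<le> col (hd (fst (hd qs'))))"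
    using qs qs_eq by (auto simp: nf_data_Cons)
  then obtain h w1' where w1: "w1 = h # w1'" "letter h" using good_word_hd by (cases w1) force+
  have w: "nf_word y0 qs = w1 @ nf_word x1 qs'" using True qs_eq by (simp add: nf_word_Cons delpow_0)
  then have "\<not> forbidden_pair g h" using red w1 by (simp add: reduced_Cons)
  then have "row g \<le> row h" using g w1(2) by (auto simp: letter_def forbidden_pair_def)
  then have "good_word (g # w1)" using d g w1 by (simp add: good_word_Cons)
  moreover have "g # nf_word y0 qs = nf_word 0 ((g # w1, x1) # qs')"
    using w by (simp add: nf_word_Cons delpow_0)
  ultimately show ?thesis using d w1 by (intro exI[of _ "(g # w1, x1) # qs'"]) (simp add: nf_data_Cons)
next
  case False
  have "col g \<le> col (hd (fst (hd qs)))" if ne: "qs \<noteq> []" and m1: "y0 = -1"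
  proof -
    obtain w1 x1 qs' where qs_eq: "qs = (w1, x1) # qs'" using ne by (metis list.exhaust prod.exhaust)
    then have "good_word w1" using qs by (simp add: nf_data_Cons)
    then obtain h w1' where w1: "w1 = h # w1'" "letter h" using good_word_hd by (cases w1) force+
    have "nf_word y0 qs = Dli # h # w1' @ nf_word x1 qs'"
      using qs_eq w1 m1 by (simp add: nf_word_Cons delpow_neg delpow_0)
    then have "\<not> forbidden_triple g Dli h" using red by (simp add: reduced_Cons)
    then show ?thesis using g w1 qs_eq by (auto simp: letter_def forbidden_triple_def)
  qed
  then have "nf_data (([g], y0) # qs)" using False qs g by (auto simp: nf_data_Cons good_word_single)
  moreover have "g # nf_word y0 qs = nf_word 0 (([g], y0) # qs)" by (simp add: nf_word_Cons delpow_0)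
  ultimately show ?thesis by blast
qed

lemma reduced_normal_word: "reduced w \<Longrightarrow> w \<in> normal_words"
proof (induction w)
  case Nil
  have "[] = nf_word 0 []" by (simp add: nf_word_Nil delpow_0)
  then show ?case unfolding normal_words_def using nf_data_Nil by blast
next
  case (Cons g w)
  then obtain y0 qs where w: "w = nf_word y0 qs" and qs: "nf_data qs"
    by (auto simp: reduced_Cons normal_words_def)
  consider "g = Dl \<or> g = Dli" | "letter g" by (cases g) (auto simp: letter_def)
  then show ?case
  proof cases
    case 1
    then show ?thesis
      using delta_Cons_nf_word[of g y0 qs] Cons.prems w qs by (auto simp: normal_words_def)
  next
    case 2
    then show ?thesis
      using letter_Cons_nf_word[of g y0 qs] Cons.prems w qs by (auto simp: normal_words_def)
  qed
qed

lemma reduced_replicate_append: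
  assumes g: "g = Dl \<or> g = Dli" and ys: "reduced ys" "ys = [] \<or> letter (hd ys)"
  shows "reduced (replicate n g @ ys)"
proof (induction n)
  case (Suc n)
  have "y = g \<or> letter y" if "replicate n g @ ys = y # w" for y w
    using that ys(2) by (cases n) auto
  then have "\<not> forbidden_pair g y" if "replicate n g @ ys = y # w" for y w
    using that g by (fastforce simp: forbidden_pair_def letter_def)
  moreover have "\<not> forbidden_triple g y z" for y z
    using g by (auto simp: forbidden_triple_def)
  ultimately show ?case
    using Suc.IH by (auto simp: reduced_Cons split: list.splits)
qed (simp add: ys)

lemma reduced_delpow_append:
  "reduced ys \<Longrightarrow> ys = [] \<or> letter (hd ys) \<Longrightarrow> reduced (delpow x @ ys)"
  unfolding delpow_def using reduced_replicate_append by auto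

lemma reduced_good_word_append:
  "good_word w \<Longrightarrow> reduced (last w # zs) \<Longrightarrow> reduced zs \<Longrightarrow> reduced (w @ zs)"
proof (induction w)
  case (Cons g w)
  show ?case
  proof (cases "w = []")
    case False
    then have gw: "letter g" "good_word w" "row g \<le> row (hd w)"
      using Cons.prems good_word_Cons by auto
    obtain h w' where w: "w = h # w'" using False by (cases w) auto
    have "letter h" using good_word_hd[OF gw(2)] w by simp
    then have "\<not> forbidden_pair g h" "\<not> forbidden_triple g h z" for z
      using gw w by (auto simp: forbidden_pair_def forbidden_triple_def letter_def)
    moreover have "reduced (w @ zs)" using Cons False gw(2) by simp
    ultimately show ?thesis using w by (simp add: reduced_Cons split: list.splits)
  qed (use Cons in simp)
qed simp

lemma reduced_letter_Cons_nf_word: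
  assumes l: "letter l" and d: "nf_data ps" and red: "reduced (nf_word x ps)"
    and c: "ps \<noteq> [] \<longrightarrow> x \<noteq> 0 \<and> (x = -1 \<longrightarrow> col l \<le> col (hd (fst (hd ps))))"
  shows "reduced (l # nf_word x ps)"
proof -
  have l': "\<not> forbidden_pair l Dl" "\<not> forbidden_pair l Dli" "\<not> forbidden_triple l Dl z" for z
    using l by (auto simp: letter_def forbidden_pair_def forbidden_triple_def)
  consider "x > 0" | "x = 0" "ps = []" | "x = -1" | "x < -1" using c by linarith
  then show ?thesis
  proof cases
    case 1
    then show ?thesis using red l' by (simp add: nf_word_def delpow_pos reduced_Cons split: list.splits)
  next
    case 2
    then show ?thesis by (simp add: nf_word_Nil delpow_0)
  next
    case 3
    then have w: "nf_word x ps = Dli # nf_word 0 ps" by (simp add: nf_word_def delpow_neg)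
    show ?thesis
    proof (cases ps)
      case Nil
      then show ?thesis using red l' w by (simp add: nf_word_Nil delpow_0)
    next
      case (Cons p ps')
      obtain w2 x2 where p: "p = (w2, x2)" by (cases p)
      have "good_word w2" using d Cons p by (simp add: nf_data_Cons)
      then obtain h w2' where "w2 = h # w2'" "letter h" using good_word_hd by (cases w2) force+
      moreover have "col l \<le> col h" using c 3 Cons p \<open>w2 = h # w2'\<close> by simp
      ultimately have "\<not> forbidden_triple l Dli h"
        using l by (auto simp: letter_def forbidden_triple_def)
      then show ?thesis
        using red l' w Cons p \<open>w2 = h # w2'\<close> by (simp add: nf_word_Cons delpow_0 reduced_Cons)
    qed
  next
    case 4
    then have "\<exists>w. nf_word x ps = Dli # Dli # w"
      by (simp add: nf_word_def delpow_neg)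
    then show ?thesis using red l' by (auto simp: reduced_Cons forbidden_triple_def)
  qed
qed

lemma nf_word_reduced: "nf_data ps \<Longrightarrow> reduced (nf_word x0 ps)"
proof (induction ps arbitrary: x0)
  case Nil
  then show ?case using reduced_delpow_append[of "[]"] by (simp add: nf_word_Nil)
next
  case (Cons p ps)
  obtain w x where p: "p = (w, x)" by (cases p)
  have d: "good_word w" "nf_data ps"
    "ps \<noteq> [] \<longrightarrow> x \<noteq> 0 \<and> (x = -1 \<longrightarrow> col (last w) \<le> col (hd (fst (hd ps))))"
    using Cons.prems p by (auto simp: nf_data_Cons)
  have red: "reduced (nf_word x ps)" using Cons.IH d by simp
  have "reduced (last w # nf_word x ps)"
    using reduced_letter_Cons_nf_word[OF good_word_last[OF d(1)] d(2) red d(3)] .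
  then have "reduced (w @ nf_word x ps)" using reduced_good_word_append d(1) red by blast
  moreover have "letter (hd (w @ nf_word x ps))" using good_word_hd[OF d(1)] by simp
  ultimately show ?case using p reduced_delpow_append by (simp add: nf_word_Cons)
qed

lemma normal_words_eq_reduced: "normal_words = {w. reduced w}"
  using nf_word_reduced reduced_normal_word unfolding normal_words_def by blast

lemma lincomb_Nil: "lincomb [] w = 0"
  by (simp add: lincomb_def)

lemma lincomb_Cons: "lincomb ((c, x) # ps) w = (if x = w then c else 0) + lincomb ps w"
  by (simp add: lincomb_def)

lemma lincomb_append: "lincomb (ps @ qs) w = lincomb ps w + lincomb qs w"
  by (simp add: lincomb_def)

lemma lincomb_not_in: "x \<notin> snd ` set ps \<Longrightarrow> lincomb ps x = 0"
  by (induction ps) (auto simp: lincomb_def)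

lemma lincomb_sandw: "lincomb (sandw u r v) w = (\<Sum>(e, x)\<leftarrow>r. if u @ x @ v = w then e else 0)"
  by (induction r) (auto simp: lincomb_def sandw_def)

lemma lincomb_sandw_shift:
  "lincomb (sandw (u @ u') r (v' @ v)) (u @ x @ v) = lincomb (sandw u' r v') x"
  unfolding lincomb_sandw by (rule arg_cong[where f = sum_list]) auto

lemma lincomb_sandw_at: "lincomb (sandw u r v) (u @ x @ v) = lincomb r x"
  using lincomb_sandw_shift[of u "[]" r "[]" v x] by (simp add: sandw_def)

lemma lincomb_sandw_nonzero:
  "lincomb (sandw u r v) w \<noteq> 0 \<Longrightarrow> \<exists>e x. (e, x) \<in> set r \<and> w = u @ x @ v"
proof (induction r)
  case (Cons p r)
  then show ?case by (cases p) (auto simp: lincomb_sandw split: if_splits)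
qed (simp add: lincomb_def sandw_def)

lemma lincomb_sandw_outside: "\<nexists>x. w = u @ x @ v \<Longrightarrow> lincomb (sandw u r v) w = 0"
  using lincomb_sandw_nonzero by blast

lemma lincomb_sandw_split_lead:
  "lincomb (sandw u r v) w =
     lincomb r x * (if u @ x @ v = w then 1 else 0) + lincomb (sandw u (filter (\<lambda>(e, y). y \<noteq> x) r) v) w"
  by (induction r) (auto simp: lincomb_def sandw_def algebra_simps)

lemma sum_list_swap:
  fixes f :: "'a \<Rightarrow> 'b \<Rightarrow> 'c::comm_monoid_add"
  shows "(\<Sum>a\<leftarrow>xs. \<Sum>b\<leftarrow>ys. f a b) = (\<Sum>b\<leftarrow>ys. \<Sum>a\<leftarrow>xs. f a b)"
  by (induction xs) (simp_all add: sum_list_addf)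

lemma sum_list_split_word:
  fixes G :: "word \<Rightarrow> 'k::field"
  shows "(\<Sum>(e, y)\<leftarrow>r. e * G y) = lincomb r l * G l + (\<Sum>(e, y)\<leftarrow>filter (\<lambda>(e, y). y \<noteq> l) r. e * G y)"
  by (induction r) (auto simp: lincomb_def algebra_simps)

text \<open>\<open>RTerm c u r v\<close> stands for the element \<open>c u r v\<close> of the ideal.\<close>

datatype 'k rterm = RTerm 'k word "('k \<times> word) list" word

fun rt_rel :: "'k rterm \<Rightarrow> ('k \<times> word) list" where
  "rt_rel (RTerm c u r v) = r"

fun rterm_eval :: "'k::field rterm \<Rightarrow> word \<Rightarrow> 'k" where
  "rterm_eval (RTerm c u r v) w = c * lincomb (sandw u r v) w"

fun rterm_key :: "'k rterm \<Rightarrow> nat" where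
  "rterm_key (RTerm c u r v) = word_code (u @ lead_word r @ v)"

fun scale_rterm :: "'k::times \<Rightarrow> 'k rterm \<Rightarrow> 'k rterm" where
  "scale_rterm a (RTerm c u r v) = RTerm (a * c) u r v"

fun shift_rterm :: "word \<Rightarrow> word \<Rightarrow> 'k rterm \<Rightarrow> 'k rterm" where
  "shift_rterm u v (RTerm c u' r v') = RTerm c (u @ u') r (v' @ v)"

fun rterm_expand :: "'k::times rterm \<Rightarrow> ('k \<times> word) list" where
  "rterm_expand (RTerm c u r v) = map (\<lambda>(e, x). (c * e, u @ x @ v)) r"

definition rsum :: "'k::field rterm list \<Rightarrow> word \<Rightarrow> 'k" where
  "rsum T w = (\<Sum>t\<leftarrow>T. rterm_eval t w)"

definition valid_rterms :: "'k::field rterm list \<Rightarrow> bool" where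
  "valid_rterms T \<longleftrightarrow> (\<forall>t \<in> set T. rt_rel t \<in> rels)"

lemma rsum_Nil: "rsum [] = (\<lambda>_. 0)"
  by (simp add: rsum_def fun_eq_iff)

lemma rsum_Cons: "rsum (t # T) w = rterm_eval t w + rsum T w"
  by (simp add: rsum_def)

lemma rsum_append: "rsum (T @ T') w = rsum T w + rsum T' w"
  by (simp add: rsum_def)

lemma rsum_filter: "rsum T w = rsum (filter P T) w + rsum (filter (\<lambda>t. \<not> P t) T) w"
  by (induction T) (auto simp: rsum_def)

lemma rterm_eval_scale: "rterm_eval (scale_rterm a t) w = a * rterm_eval t w"
  by (cases t) simp

lemma rsum_scale: "rsum (map (scale_rterm a) T) w = a * rsum T w"
  by (induction T) (simp_all add: rsum_def rterm_eval_scale algebra_simps)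

lemma rterm_key_scale [simp]: "rterm_key (scale_rterm a t) = rterm_key t"
  by (cases t) simp

lemma rt_rel_scale [simp]: "rt_rel (scale_rterm a t) = rt_rel t"
  by (cases t) simp

lemma valid_rterms_append: "valid_rterms (T @ T') \<longleftrightarrow> valid_rterms T \<and> valid_rterms T'"
  by (auto simp: valid_rterms_def)

lemma valid_rterms_scale: "valid_rterms (map (scale_rterm a) T) \<longleftrightarrow> valid_rterms T"
  by (simp add: valid_rterms_def)

lemma rt_rel_shift [simp]: "rt_rel (shift_rterm u v t) = rt_rel t"
  by (cases t) simp

lemma rterm_eval_shift_at: "rterm_eval (shift_rterm u v t) (u @ x @ v) = rterm_eval t x"
  by (cases t) (simp add: lincomb_sandw_shift)

lemma rterm_eval_shift_outside: "\<nexists>x. w = u @ x @ v \<Longrightarrow> rterm_eval (shift_rterm u v t) w = 0"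
proof (cases t)
  case (RTerm c u' r v')
  assume "\<nexists>x. w = u @ x @ v"
  then have "\<nexists>x. w = (u @ u') @ x @ (v' @ v)" by (metis append.assoc)
  then show ?thesis using RTerm by (simp add: lincomb_sandw_outside)
qed

lemma rsum_shift_at: "rsum (map (shift_rterm u v) T) (u @ x @ v) = rsum T x"
  by (simp add: rsum_def o_def rterm_eval_shift_at)

lemma rsum_shift_outside: "\<nexists>x. w = u @ x @ v \<Longrightarrow> rsum (map (shift_rterm u v) T) w = 0"
  by (simp add: rsum_def o_def rterm_eval_shift_outside)

lemma rterm_key_shift_less:
  "rterm_key t < word_code W \<Longrightarrow> rterm_key (shift_rterm u v t) < word_code (u @ W @ v)"
proof (cases t)
  case (RTerm c u' r v')
  assume "rterm_key t < word_code W"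
  then have "word_code (u @ (u' @ lead_word r @ v') @ v) < word_code (u @ W @ v)"
    using RTerm word_code_append_mono_strict[of "u' @ lead_word r @ v'" W u v] by simp
  then show ?thesis using RTerm by simp
qed

lemma rsum_map_RTerm:
  "rsum (map (\<lambda>(e, y). RTerm e (U y) r (V y)) L) w = (\<Sum>(e, y)\<leftarrow>L. e * lincomb (sandw (U y) r (V y)) w)"
  by (induction L) (auto simp: rsum_def)

lemma rsum_eq_lincomb: "rsum T = lincomb (concat (map rterm_expand T))"
proof
  fix w
  have "lincomb (map (\<lambda>(e, x). (c * e, u @ x @ v)) r) w = c * lincomb (sandw u r v) w" for c u r v
    by (induction r) (auto simp: lincomb_def sandw_def algebra_simps)
  then have eq: "lincomb (rterm_expand t) w = rterm_eval t w" for t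
    by (cases t) simp
  show "rsum T w = lincomb (concat (map rterm_expand T)) w"
    by (induction T) (auto simp: rsum_Nil rsum_Cons lincomb_Nil lincomb_append eq)
qed

lemma rel_ideal_eq_rsum: "rel_ideal = {rsum T | T. valid_rterms T}"
proof (intro set_eqI iffI)
  fix f :: "word \<Rightarrow> 'k::field"
  assume "f \<in> rel_ideal"
  then show "f \<in> {rsum T | T. valid_rterms T}"
  proof (induction rule: rel_ideal.induct)
    case zero
    show ?case by (intro CollectI exI[of _ "[]"]) (simp add: valid_rterms_def rsum_Nil)
  next
    case (step f r c u v)
    then obtain T where "valid_rterms T" "f = rsum T" by blast
    then have "valid_rterms (RTerm c u r v # T)" "(\<lambda>w. f w + c * lincomb (sandw u r v) w) = rsum (RTerm c u r v # T)"
      using step by (auto simp: valid_rterms_def rsum_Cons)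
    then show ?case by blast
  qed
next
  fix f :: "word \<Rightarrow> 'k::field"
  assume "f \<in> {rsum T | T. valid_rterms T}"
  then obtain T where T: "valid_rterms T" "f = rsum T" by blast
  have "rsum T \<in> rel_ideal" using T(1)
  proof (induction T)
    case Nil
    then show ?case using rel_ideal.zero by (simp add: rsum_Nil)
  next
    case (Cons t T)
    obtain c u r v where t: "t = RTerm c u r v" by (cases t)
    have "rsum (t # T) = (\<lambda>w. rsum T w + c * lincomb (sandw u r v) w)"
      by (simp add: fun_eq_iff rsum_Cons t)
    then show ?case using Cons rel_ideal.step[of "rsum T" r c u v] t by (simp add: valid_rterms_def)
  qed
  then show "f \<in> rel_ideal" using T by simp
qed

definition below :: "nat \<Rightarrow> (word \<Rightarrow> 'k::field) \<Rightarrow> bool" where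
  "below N f \<longleftrightarrow> (\<exists>T. valid_rterms T \<and> (\<forall>t \<in> set T. rterm_key t < N) \<and> f = rsum T)"

lemma below_zero: "below N (\<lambda>_. 0)"
  unfolding below_def by (intro exI[of _ "[]"]) (simp add: valid_rterms_def rsum_Nil)

lemma below_lin: "below N f \<Longrightarrow> below N g \<Longrightarrow> below N (\<lambda>w. a * f w + b * g w)"
proof -
  assume "below N f" "below N g"
  then obtain T T' where T: "valid_rterms T" "\<forall>t \<in> set T. rterm_key t < N" "f = rsum T"
    and T': "valid_rterms T'" "\<forall>t \<in> set T'. rterm_key t < N" "g = rsum T'"
    unfolding below_def by blast
  show ?thesis
    unfolding below_def using T T'
    by (intro exI[of _ "map (scale_rterm a) T @ map (scale_rterm b) T'"])
      (auto simp: valid_rterms_append valid_rterms_scale rsum_append rsum_scale fun_eq_iff)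
qed

section \<open>Resolving the ambiguities\<close>

text \<open>The S-polynomial of two relation terms with the same leading word: the leading terms cancel.\<close>

definition spoly :: "word \<Rightarrow> ('k::field \<times> word) list \<Rightarrow> word \<Rightarrow> word \<Rightarrow> ('k \<times> word) list \<Rightarrow> word \<Rightarrow> word \<Rightarrow> 'k" where
  "spoly u1 r1 v1 u2 r2 v2 w =
     lincomb (sandw u1 r1 v1) w - lead_coeff r1 / lead_coeff r2 * lincomb (sandw u2 r2 v2) w"

lemma below_spoly_shift:
  assumes "below (word_code W) (spoly u1 r1 v1 u2 r2 v2)"
  shows "below (word_code (u @ W @ v)) (spoly (u @ u1) r1 (v1 @ v) (u @ u2) r2 (v2 @ v))"
proof -
  obtain T where T: "valid_rterms T" "\<forall>t \<in> set T. rterm_key t < word_code W"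
    "spoly u1 r1 v1 u2 r2 v2 = rsum T"
    using assms unfolding below_def by blast
  have "spoly (u @ u1) r1 (v1 @ v) (u @ u2) r2 (v2 @ v) w = rsum (map (shift_rterm u v) T) w" for w
  proof (cases "\<exists>x. w = u @ x @ v")
    case True
    then obtain x where "w = u @ x @ v" by blast
    then show ?thesis
      using fun_cong[OF T(3), of x] by (simp add: spoly_def rsum_shift_at lincomb_sandw_shift)
  next
    case False
    then have "\<nexists>x. w = (u @ u1) @ x @ (v1 @ v)" "\<nexists>x. w = (u @ u2) @ x @ (v2 @ v)"
      by (metis append.assoc)+
    with False show ?thesis by (simp add: spoly_def rsum_shift_outside lincomb_sandw_outside)
  qed
  then have "spoly (u @ u1) r1 (v1 @ v) (u @ u2) r2 (v2 @ v) = rsum (map (shift_rterm u v) T)" ..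
  moreover have "valid_rterms (map (shift_rterm u v) T)"
    using T(1) by (simp add: valid_rterms_def)
  moreover have "\<forall>t \<in> set (map (shift_rterm u v) T). rterm_key t < word_code (u @ W @ v)"
    using T(2) by (auto intro!: rterm_key_shift_less)
  ultimately show ?thesis
    unfolding below_def by blast
qed

text \<open>Expanding \<open>u p m q v\<close> along either factor gives the same element.\<close>

lemma expand_product_two_ways:
  fixes p q :: "('k::field \<times> word) list"
  shows "(\<Sum>(e, y)\<leftarrow>q. e * lincomb (sandw u p (m @ y @ v)) w) =
         (\<Sum>(e, x)\<leftarrow>p. e * lincomb (sandw (u @ x @ m) q v) w)"
proof -
  have mult_sum: "c * (\<Sum>(e, x)\<leftarrow>r. if P x then e else 0) = (\<Sum>(e, x)\<leftarrow>r. if P x then c * e else 0)"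
    and mult_sum': "c * (\<Sum>(e, x)\<leftarrow>r. if P x then e else 0) = (\<Sum>(e, x)\<leftarrow>r. if P x then e * c else 0)"
    for c :: 'k and r :: "('k \<times> word) list" and P
    by (induction r) (auto simp: algebra_simps)
  have "(\<Sum>(e, y)\<leftarrow>q. e * lincomb (sandw u p (m @ y @ v)) w) =
      (\<Sum>(e, y)\<leftarrow>q. \<Sum>(e', x)\<leftarrow>p. if u @ x @ m @ y @ v = w then e * e' else 0)"
    by (simp add: lincomb_sandw mult_sum)
  also have "\<dots> = (\<Sum>(e', x)\<leftarrow>p. \<Sum>(e, y)\<leftarrow>q. if u @ x @ m @ y @ v = w then e * e' else 0)"
    using sum_list_swap[where xs = q and ys = p
        and f = "\<lambda>(e, y) (e', x). if u @ x @ m @ y @ v = w then e * e' else 0"]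
    by (simp add: case_prod_unfold)
  also have "\<dots> = (\<Sum>(e, x)\<leftarrow>p. e * lincomb (sandw (u @ x @ m) q v) w)"
    by (simp add: lincomb_sandw mult_sum')
  finally show ?thesis .
qed

lemma below_spoly_disjoint:
  fixes r1 r2 :: "('k::field \<times> word) list"
  assumes r1: "r1 \<in> rels" and r2: "r2 \<in> rels"
  shows "below (word_code (u @ lead_word r1 @ m @ lead_word r2 @ v))
    (spoly u r1 (m @ lead_word r2 @ v) (u @ lead_word r1 @ m) r2 v)"
proof -
  define l1 where "l1 = lead_word r1"
  define l2 where "l2 = lead_word r2"
  define X where "X = map (\<lambda>(e, y). RTerm e u r1 (m @ y @ v)) (filter (\<lambda>(e, y). y \<noteq> l2) r2)"
  define Y where "Y = map (\<lambda>(e, x). RTerm e (u @ x @ m) r2 v) (filter (\<lambda>(e, x). x \<noteq> l1) r1)"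
  define T where "T = map (scale_rterm (1 / lead_coeff r2)) Y @ map (scale_rterm (- 1 / lead_coeff r2)) X"
  have lc: "lead_coeff r2 \<noteq> 0" using lead_coeff_nonzero[OF r2] .
  have "lead_coeff r2 * lincomb (sandw u r1 (m @ l2 @ v)) w + rsum X w =
        lead_coeff r1 * lincomb (sandw (u @ l1 @ m) r2 v) w + rsum Y w" for w
    using expand_product_two_ways[where p = r1 and q = r2 and u = u and m = m and v = v and w = w]
      sum_list_split_word[where G = "\<lambda>y. lincomb (sandw u r1 (m @ y @ v)) w" and r = r2 and l = l2]
      sum_list_split_word[where G = "\<lambda>x. lincomb (sandw (u @ x @ m) r2 v) w" and r = r1 and l = l1]
    by (simp add: X_def Y_def rsum_map_RTerm lead_coeff_def l1_def l2_def)
  then have "spoly u r1 (m @ l2 @ v) (u @ l1 @ m) r2 v = rsum T"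
    using lc by (auto simp: fun_eq_iff spoly_def T_def rsum_append rsum_scale l1_def field_simps)
  moreover have "valid_rterms T"
    using r1 r2 by (auto simp: T_def valid_rterms_append valid_rterms_scale valid_rterms_def X_def Y_def)
  moreover have "rterm_key t < word_code (u @ l1 @ m @ l2 @ v)" if t: "t \<in> set X" for t
  proof -
    obtain e y where "(e, y) \<in> set r2" "y \<noteq> l2" "t = RTerm e u r1 (m @ y @ v)"
      using t by (auto simp: X_def)
    then show ?thesis
      using word_code_less_lead_word[OF r2] word_code_append_mono_strict[of y l2 "u @ l1 @ m" v]
      by (simp add: l1_def l2_def)
  qed
  moreover have "rterm_key t < word_code (u @ l1 @ m @ l2 @ v)" if t: "t \<in> set Y" for t
  proof -
    obtain e x where "(e, x) \<in> set r1" "x \<noteq> l1" "t = RTerm e (u @ x @ m) r2 v"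
      using t by (auto simp: Y_def)
    then show ?thesis
      using word_code_less_lead_word[OF r1] word_code_append_mono_strict[of x l1 u "m @ l2 @ v"]
      by (simp add: l1_def l2_def)
  qed
  ultimately have "below (word_code (u @ l1 @ m @ l2 @ v)) (spoly u r1 (m @ l2 @ v) (u @ l1 @ m) r2 v)"
    unfolding below_def by (intro exI[of _ T]) (auto simp: T_def)
  then show ?thesis by (simp add: l1_def l2_def)
qed

lemma below_spoly_certificate:
  fixes T :: "'k::field rterm list"
  assumes "valid_rterms T" and "\<forall>t \<in> set T. rterm_key t < N"
    and "\<forall>x \<in> snd ` set (concat (map rterm_expand T) @ sandw u1 r1 v1 @ sandw u2 r2 v2).
           lincomb (concat (map rterm_expand T)) x = spoly u1 r1 v1 u2 r2 v2 x"
  shows "below N (spoly u1 r1 v1 u2 r2 v2)"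
proof -
  have "rsum T = spoly u1 r1 v1 u2 r2 v2"
  proof
    fix x
    show "rsum T x = spoly u1 r1 v1 u2 r2 v2 x"
    proof (cases "x \<in> snd ` set (concat (map rterm_expand T) @ sandw u1 r1 v1 @ sandw u2 r2 v2)")
      case True
      then show ?thesis using assms(3) unfolding rsum_eq_lincomb by blast
    next
      case False
      then show ?thesis
        by (simp add: rsum_eq_lincomb spoly_def lincomb_not_in image_Un del: set_concat)
    qed
  qed
  then show ?thesis using assms(1,2) unfolding below_def by auto
qed

lemmas certificate_simps =
  valid_rterms_def rels_eq spoly_def lincomb_def sandw_def R_defs lead_coeff_def lead_word_def

lemma overlap_cases:
  fixes r1 r2 :: "('k::field \<times> word) list"
  assumes rels: "r1 \<in> rels" "r2 \<in> rels" and k: "0 < k" "k < length (lead_word r1)"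
    and ov: "drop k (lead_word r1) = take (length (lead_word r1) - k) (lead_word r2)"
      "length (lead_word r1) - k < length (lead_word r2)"
  shows "(r1, r2, k) \<in> {(R2, R7, 1), (R2, R9, 1), (R3, R7, 1), (R3, R9, 1), (R5, R6, 1), (R6, R5, 1),
    (R7, R1, 2), (R7, R3, 2), (R10, R1, 2), (R10, R3, 2)}"
proof -
  have "length (lead_word r1) \<le> 3" using rels(1) by (auto simp: rels_eq lead_word_R)
  then have "k = 1 \<or> k = 2" using k by auto
  then show ?thesis
    using rels k(2) ov unfolding rels_eq
    by (elim disjE insertE emptyE) (simp_all only: lead_word_R, simp_all)
qed

text \<open>Each certificate \<open>T\<close> below is read off from reducing both sides of the overlap to
  normal form.\<close>

lemma below_spoly_overlap:
  fixes r1 r2 :: "('k::field \<times> word) list"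
  assumes rels: "r1 \<in> rels" "r2 \<in> rels" and ov: "lead_word r1 = m @ s" "lead_word r2 = s @ t"
    and ne: "m \<noteq> []" "s \<noteq> []" "t \<noteq> []"
  shows "below (word_code (lead_word r1 @ t)) (spoly [] r1 t m r2 [])"
proof -
  define k where "k = length m"
  have mt: "m = take k (lead_word r1)" "t = drop (length (lead_word r1) - k) (lead_word r2)"
    using ov by (simp_all add: k_def)
  have "(r1, r2, k) \<in> {(R2, R7, 1), (R2, R9, 1), (R3, R7, 1), (R3, R9, 1), (R5, R6, 1), (R6, R5, 1),
    (R7, R1, 2), (R7, R3, 2), (R10, R1, 2), (R10, R3, 2)}"
    using ov ne by (intro overlap_cases[OF rels]) (auto simp: k_def)
  then show ?thesis
  proof (elim insertE emptyE)
  assume "(r1, r2, k) = (R2, R7, 1)"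
  then show ?thesis
    using mt by (simp add: lead_word_R)
      (rule below_spoly_certificate[where T = "[RTerm (-1) [] R4 [Dli, Ld], RTerm (-1) [Lb] R10 [], RTerm (-1) [] R5 [Ld]]"], auto simp: certificate_simps)
next
  assume "(r1, r2, k) = (R2, R9, 1)"
  then show ?thesis
    using mt by (simp add: lead_word_R)
      (rule below_spoly_certificate[where T = "[RTerm (-1) [] R4 [Dli, Lb], RTerm 1 [Lb] R8 [], RTerm (-1) [] R5 [Lb]]"], auto simp: certificate_simps)
next
  assume "(r1, r2, k) = (R3, R7, 1)"
  then show ?thesis
    using mt by (simp add: lead_word_R)
      (rule below_spoly_certificate[where T = "[RTerm 1 [] R1 [Dli, Ld], RTerm (-1) [La] R10 [], RTerm (-1) [] R5 [Lc]]"], auto simp: certificate_simps)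
next
  assume "(r1, r2, k) = (R3, R9, 1)"
  then show ?thesis
    using mt by (simp add: lead_word_R)
      (rule below_spoly_certificate[where T = "[RTerm 1 [] R1 [Dli, Lb], RTerm 1 [La] R8 [], RTerm (-1) [] R5 [La]]"], auto simp: certificate_simps)
next
  assume "(r1, r2, k) = (R5, R6, 1)"
  then show ?thesis
    using mt by (simp add: lead_word_R)
      (rule below_spoly_certificate[where T = "[]"], auto simp: certificate_simps)
next
  assume "(r1, r2, k) = (R6, R5, 1)"
  then show ?thesis
    using mt by (simp add: lead_word_R)
      (rule below_spoly_certificate[where T = "[]"], auto simp: certificate_simps)
next
  assume "(r1, r2, k) = (R7, R1, 2)"
  then show ?thesis
    using mt by (simp add: lead_word_R)
      (rule below_spoly_certificate[where T = "[RTerm (-1) [] R9 [Lc], RTerm 1 [La, Dli] R4 [], RTerm 1 [La] R6 []]"], auto simp: certificate_simps)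
next
  assume "(r1, r2, k) = (R7, R3, 2)"
  then show ?thesis
    using mt by (simp add: lead_word_R)
      (rule below_spoly_certificate[where T = "[RTerm (-1) [] R9 [Ld], RTerm (-1) [La, Dli] R2 [], RTerm 1 [Lb] R6 []]"], auto simp: certificate_simps)
next
  assume "(r1, r2, k) = (R10, R1, 2)"
  then show ?thesis
    using mt by (simp add: lead_word_R)
      (rule below_spoly_certificate[where T = "[RTerm (-1) [] R8 [Lc], RTerm 1 [Lc, Dli] R4 [], RTerm 1 [Lc] R6 []]"], auto simp: certificate_simps)
next
  assume "(r1, r2, k) = (R10, R3, 2)"
  then show ?thesis
    using mt by (simp add: lead_word_R)
      (rule below_spoly_certificate[where T = "[RTerm (-1) [] R8 [Ld], RTerm (-1) [Lc, Dli] R2 [], RTerm 1 [Ld] R6 []]"], auto simp: certificate_simps)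
  qed
qed

lemma below_spoly_if_shorter_prefix:
  fixes r1 r2 :: "('k::field \<times> word) list"
  assumes r1: "r1 \<in> rels" and r2: "r2 \<in> rels"
    and eq: "u1 @ lead_word r1 @ v1 = u2 @ lead_word r2 @ v2" and less: "length u1 < length u2"
  shows "below (word_code (u1 @ lead_word r1 @ v1)) (spoly u1 r1 v1 u2 r2 v2)"
proof -
  obtain m where "u1 = u2 @ m \<and> m @ lead_word r1 @ v1 = lead_word r2 @ v2 \<or>
      u1 @ m = u2 \<and> lead_word r1 @ v1 = m @ lead_word r2 @ v2"
    using eq unfolding append_eq_append_conv2 by blast
  then have u2: "u2 = u1 @ m" and m: "m \<noteq> []" and eq': "lead_word r1 @ v1 = m @ lead_word r2 @ v2"
    using less by auto
  have disjoint: ?thesis if "m = lead_word r1 @ s" "v1 = s @ lead_word r2 @ v2" for s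
    using below_spoly_disjoint[OF r1 r2, of u1 s v2] that u2 by simp
  obtain s where "lead_word r1 = m @ s \<and> s @ v1 = lead_word r2 @ v2 \<or>
      lead_word r1 @ s = m \<and> v1 = s @ lead_word r2 @ v2"
    using eq' unfolding append_eq_append_conv2 by blast
  then show ?thesis
  proof
    assume ov: "lead_word r1 = m @ s \<and> s @ v1 = lead_word r2 @ v2"
    show ?thesis
    proof (cases "s = []")
      case True
      then show ?thesis using ov disjoint[of "[]"] by simp
    next
      case False
      obtain t where "s = lead_word r2 @ t \<and> t @ v1 = v2 \<or> s @ t = lead_word r2 \<and> v1 = t @ v2"
        using ov unfolding append_eq_append_conv2 by blast
      moreover have "s \<noteq> lead_word r2 @ t" for t
        using lead_word_not_inner_factor[OF r1 r2 m] ov by auto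
      ultimately have t: "lead_word r2 = s @ t" "v1 = t @ v2" by auto
      moreover have "t \<noteq> []"
        using t lead_word_not_inner_factor[OF r1 r2 m, of "[]"] ov by auto
      ultimately have "below (word_code (lead_word r1 @ t)) (spoly [] r1 t m r2 [])"
        using below_spoly_overlap[OF r1 r2 _ _ m False] ov by blast
      from below_spoly_shift[OF this, of u1 v2] show ?thesis using t u2 by simp
    qed
  qed (use disjoint in blast)
qed

lemma below_spoly:
  fixes r1 r2 :: "('k::field \<times> word) list"
  assumes r1: "r1 \<in> rels" and r2: "r2 \<in> rels" and eq: "u1 @ lead_word r1 @ v1 = u2 @ lead_word r2 @ v2"
  shows "below (word_code (u1 @ lead_word r1 @ v1)) (spoly u1 r1 v1 u2 r2 v2)"
proof -
  have lc: "lead_coeff r1 \<noteq> 0" "lead_coeff r2 \<noteq> 0" using lead_coeff_nonzero r1 r2 by auto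
  consider "length u1 < length u2" | "length u1 = length u2" | "length u2 < length u1" by linarith
  then show ?thesis
  proof cases
    case 1
    then show ?thesis using below_spoly_if_shorter_prefix[OF r1 r2 eq] by simp
  next
    case 2
    then have "u1 = u2" "lead_word r1 @ v1 = lead_word r2 @ v2" using eq by auto
    moreover from this have "r1 = r2" using lead_word_prefix_unique[OF r1 r2] by blast
    ultimately have "spoly u1 r1 v1 u2 r2 v2 = (\<lambda>_. 0)" using lc by (simp add: spoly_def fun_eq_iff)
    then show ?thesis using below_zero by metis
  next
    case 3
    have "below (word_code (u1 @ lead_word r1 @ v1)) (spoly u2 r2 v2 u1 r1 v1)"
      using below_spoly_if_shorter_prefix[OF r2 r1 eq[symmetric] 3] eq by simp
    from below_lin[OF this this, of "- (lead_coeff r1 / lead_coeff r2)" 0]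
    show ?thesis
      by (rule back_subst[of "below _"]) (use lc in \<open>simp add: fun_eq_iff spoly_def field_simps\<close>)
  qed
qed

section \<open>Independence of the normal words\<close>

lemma rterm_eval_above_key:
  assumes "rt_rel t \<in> rels" and "rterm_key t < word_code w"
  shows "rterm_eval t w = 0"
proof (cases t)
  case (RTerm c u r v)
  show ?thesis
  proof (rule ccontr)
    assume "rterm_eval t w \<noteq> 0"
    then obtain e x where x: "(e, x) \<in> set r" "w = u @ x @ v"
      using RTerm lincomb_sandw_nonzero by fastforce
    have "word_code x \<le> word_code (lead_word r)"
      using word_code_le_lead_word[OF _ x(1)] assms(1) RTerm by simp
    then have "word_code w \<le> rterm_key t"
      using x(2) RTerm word_code_append_mono by simp
    then show False using assms(2) by simp
  qed
qed

lemma rel_ideal_below: "f \<in> rel_ideal \<Longrightarrow> \<exists>N. below N f"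
proof -
  assume "f \<in> rel_ideal"
  then obtain T where T: "valid_rterms T" "f = rsum T" by (auto simp: rel_ideal_eq_rsum)
  have "\<forall>t \<in> set T. rterm_key t < Suc (Max (rterm_key ` set T))"
    by (simp add: le_imp_less_Suc)
  then show ?thesis using T unfolding below_def by blast
qed

lemma rsum_at_lead_word:
  assumes "valid_rterms B" and "\<forall>t \<in> set B. rterm_key t < word_code (u @ lead_word r @ v)"
  shows "rsum (RTerm c u r v # B) (u @ lead_word r @ v) = c * lead_coeff r"
proof -
  have "rterm_eval t (u @ lead_word r @ v) = 0" if "t \<in> set B" for t
    using that assms by (auto simp: valid_rterms_def intro: rterm_eval_above_key)
  then have "rsum B (u @ lead_word r @ v) = 0"
    unfolding rsum_def by (metis (mono_tags, lifting) map_cong sum_list_0)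
  then show ?thesis by (simp add: rsum_Cons lincomb_sandw_at lead_coeff_def)
qed

lemma merge_rterms_same_lead:
  fixes r1 r2 :: "('k::field \<times> word) list"
  assumes r1: "r1 \<in> rels" and r2: "r2 \<in> rels" and eq: "u1 @ lead_word r1 @ v1 = u2 @ lead_word r2 @ v2"
  obtains T where "valid_rterms T" "\<forall>t \<in> set T. rterm_key t < word_code (u1 @ lead_word r1 @ v1)"
    and "rsum [RTerm c1 u1 r1 v1, RTerm c2 u2 r2 v2] =
      rsum (RTerm (c2 + c1 * (lead_coeff r1 / lead_coeff r2)) u2 r2 v2 # T)"
proof -
  obtain T where T: "valid_rterms T" "\<forall>t \<in> set T. rterm_key t < word_code (u1 @ lead_word r1 @ v1)"
    "spoly u1 r1 v1 u2 r2 v2 = rsum T"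
    using below_spoly[OF r1 r2 eq] unfolding below_def by blast
  show thesis
  proof (rule that[of "map (scale_rterm c1) T"])
    show "rsum [RTerm c1 u1 r1 v1, RTerm c2 u2 r2 v2] =
        rsum (RTerm (c2 + c1 * (lead_coeff r1 / lead_coeff r2)) u2 r2 v2 # map (scale_rterm c1) T)"
      using T(3) by (simp add: fun_eq_iff rsum_Cons rsum_Nil rsum_scale spoly_def algebra_simps)
  qed (use T(1,2) in \<open>auto simp: valid_rterms_scale\<close>)
qed

text \<open>Eliminating the terms of largest key: two of them merge into one plus smaller terms, and
  a single one has coefficient zero, since its leading word is not reduced.\<close>

lemma below_max_key:
  fixes T :: "'k::field rterm list"
  assumes "valid_rterms T" and "\<forall>t \<in> set T. rterm_key t \<le> N"
    and "\<forall>w. rsum T w \<noteq> 0 \<longrightarrow> reduced w"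
  shows "below N (rsum T)"
  using assms
proof (induction "length (filter (\<lambda>t. rterm_key t = N) T)" arbitrary: T rule: less_induct)
  case less
  define A where "A = filter (\<lambda>t. rterm_key t = N) T"
  define B where "B = filter (\<lambda>t. rterm_key t \<noteq> N) T"
  have sum_AB: "rsum T = (\<lambda>w. rsum A w + rsum B w)"
    using rsum_filter[of T _ "\<lambda>t. rterm_key t = N"] by (simp add: A_def B_def fun_eq_iff)
  have vA: "valid_rterms A" and vB: "valid_rterms B"
    using less.prems(1) by (auto simp: valid_rterms_def A_def B_def)
  have kA: "\<forall>t \<in> set A. rterm_key t = N" by (simp add: A_def)
  have kB: "\<forall>t \<in> set B. rterm_key t < N" using less.prems(2) by (auto simp: B_def)
  have B_below: "below N (rsum B)" using vB kB unfolding below_def by blast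
  consider "A = []" | t1 where "A = [t1]" | t1 t2 A' where "A = t1 # t2 # A'"
    by (metis list.exhaust)
  then show ?case
  proof cases
    case 1
    then show ?thesis using sum_AB B_below by (simp add: rsum_Nil)
  next
    case 2
    obtain c u r v where t1: "t1 = RTerm c u r v" by (cases t1)
    have r: "r \<in> rels" and N: "word_code (u @ lead_word r @ v) = N"
      using vA kA 2 t1 by (auto simp: valid_rterms_def)
    have "rsum T (u @ lead_word r @ v) = 0"
      using less.prems(3) reduced_no_lead_word[OF _ r] by blast
    then have "c * lead_coeff r = 0"
      using sum_AB rsum_at_lead_word[OF vB] kB N 2 t1 by (simp add: rsum_Cons rsum_Nil)
    then have "rsum T = rsum B"
      using sum_AB 2 t1 lead_coeff_nonzero[OF r] by (simp add: fun_eq_iff rsum_Cons rsum_Nil)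
    then show ?thesis using B_below by simp
  next
    case 3
    obtain c1 u1 r1 v1 where t1: "t1 = RTerm c1 u1 r1 v1" by (cases t1)
    obtain c2 u2 r2 v2 where t2: "t2 = RTerm c2 u2 r2 v2" by (cases t2)
    have r: "r1 \<in> rels" "r2 \<in> rels" using vA 3 t1 t2 by (auto simp: valid_rterms_def)
    have N: "word_code (u1 @ lead_word r1 @ v1) = N" "word_code (u2 @ lead_word r2 @ v2) = N"
      using kA 3 t1 t2 by auto
    then obtain T' where T': "valid_rterms T'" "\<forall>t \<in> set T'. rterm_key t < N"
      and merge: "rsum [t1, t2] = rsum (RTerm (c2 + c1 * (lead_coeff r1 / lead_coeff r2)) u2 r2 v2 # T')"
      using merge_rterms_same_lead[OF r, of u1 v1 u2 v2 c1 c2] t1 t2 by (metis word_code_inject)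
    define Tn where "Tn = RTerm (c2 + c1 * (lead_coeff r1 / lead_coeff r2)) u2 r2 v2 # A' @ B @ T'"
    have "rsum Tn = rsum T"
      using sum_AB fun_cong[OF merge] 3 by (simp add: fun_eq_iff Tn_def rsum_Cons rsum_append rsum_Nil)
    moreover have "valid_rterms Tn" using vA vB T'(1) r 3 by (auto simp: Tn_def valid_rterms_def)
    moreover have "\<forall>t \<in> set Tn. rterm_key t \<le> N"
      using kA kB T'(2) 3 N by (auto simp: Tn_def less_imp_le)
    moreover have "length (filter (\<lambda>t. rterm_key t = N) Tn) < length (filter (\<lambda>t. rterm_key t = N) T)"
    proof -
      have "filter (\<lambda>t. rterm_key t = N) (B @ T') = []"
        using kB T'(2) by (auto simp: filter_empty_conv)
      moreover have "filter (\<lambda>t. rterm_key t = N) A' = A'" using kA 3 by (simp add: filter_id_conv)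
      ultimately show ?thesis using 3 N by (simp add: Tn_def A_def[symmetric])
    qed
    ultimately show ?thesis using less.hyps less.prems(3) by metis
  qed
qed

lemma below_reduced_eq_zero:
  "below N f \<Longrightarrow> \<forall>w. f w \<noteq> 0 \<longrightarrow> reduced w \<Longrightarrow> f = (\<lambda>_. 0)"
proof (induction N arbitrary: f)
  case 0
  then show ?case by (auto simp: below_def rsum_Nil)
next
  case (Suc N)
  then obtain T where T: "valid_rterms T" "\<forall>t \<in> set T. rterm_key t < Suc N" "f = rsum T"
    unfolding below_def by blast
  then have "below N f" using below_max_key[of T N] Suc.prems(2) by (simp add: less_Suc_eq_le)
  then show ?case using Suc by blast
qed

section \<open>The normal words span\<close>

lemma rel_ideal_lin:
  "f \<in> rel_ideal \<Longrightarrow> g \<in> rel_ideal \<Longrightarrow> (\<lambda>w. a * f w + b * g w) \<in> rel_ideal"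
proof -
  assume "f \<in> rel_ideal" "g \<in> rel_ideal"
  then obtain T T' where "valid_rterms T" "f = rsum T" "valid_rterms T'" "g = rsum T'"
    by (auto simp: rel_ideal_eq_rsum)
  then have "valid_rterms (map (scale_rterm a) T @ map (scale_rterm b) T')"
    "(\<lambda>w. a * f w + b * g w) = rsum (map (scale_rterm a) T @ map (scale_rterm b) T')"
    by (simp_all add: valid_rterms_append valid_rterms_scale rsum_append rsum_scale fun_eq_iff)
  then show ?thesis by (auto simp: rel_ideal_eq_rsum)
qed

lemma sandw_in_rel_ideal: "r \<in> rels \<Longrightarrow> lincomb (sandw u r v) \<in> rel_ideal"
  using rel_ideal.step[OF rel_ideal.zero, of r 1 u v] by simp

definition normalizable :: "(word \<Rightarrow> 'k::field) \<Rightarrow> bool" where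
  "normalizable f \<longleftrightarrow>
     (\<exists>g. finite (supp g) \<and> supp g \<subseteq> normal_words \<and> (\<lambda>w. f w - g w) \<in> rel_ideal)"

lemma normalizable_ideal: "f \<in> rel_ideal \<Longrightarrow> normalizable f"
  unfolding normalizable_def by (intro exI[of _ "\<lambda>_. 0"]) (simp add: supp_def)

lemma normalizable_lin:
  assumes "normalizable f" and "normalizable g"
  shows "normalizable (\<lambda>w. a * f w + b * g w)"
proof -
  obtain f' g' where f': "finite (supp f')" "supp f' \<subseteq> normal_words" "(\<lambda>w. f w - f' w) \<in> rel_ideal"
    and g': "finite (supp g')" "supp g' \<subseteq> normal_words" "(\<lambda>w. g w - g' w) \<in> rel_ideal"
    using assms unfolding normalizable_def by blast
  have supp: "supp (\<lambda>w. a * f' w + b * g' w) \<subseteq> supp f' \<union> supp g'"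
    by (auto simp: supp_def)
  have "(\<lambda>w. (a * f w + b * g w) - (a * f' w + b * g' w)) \<in> rel_ideal"
    using rel_ideal_lin[OF f'(3) g'(3), of a b] by (simp add: algebra_simps)
  then show ?thesis
    unfolding normalizable_def using f' g' finite_subset[OF supp] supp
    by (intro exI[of _ "\<lambda>w. a * f' w + b * g' w"]) auto
qed

lemma normalizable_lincomb:
  fixes ps :: "('k::field \<times> word) list"
  shows "(\<And>e x. (e, x) \<in> set ps \<Longrightarrow> normalizable (lincomb [(1 :: 'k, x)])) \<Longrightarrow> normalizable (lincomb ps)"
proof (induction ps)
  case Nil
  show ?case using normalizable_ideal[OF rel_ideal.zero] by (simp add: lincomb_Nil[abs_def])
next
  case (Cons p ps)
  obtain c x where p: "p = (c, x)" by (cases p)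
  have "normalizable (lincomb [(1 :: 'k, x)])" and "normalizable (lincomb ps)"
    using Cons p by auto
  moreover have "lincomb (p # ps) = (\<lambda>w. c * lincomb [(1, x)] w + 1 * lincomb ps w)"
    by (simp add: fun_eq_iff p lincomb_Cons lincomb_Nil)
  ultimately show ?case by (simp only: normalizable_lin)
qed

lemma normalizable_word: "normalizable (lincomb [(1, w)] :: word \<Rightarrow> 'k::field)"
proof (induction "word_code w" arbitrary: w rule: less_induct)
  case less
  show ?case
  proof (cases "reduced w")
    case True
    have "supp (lincomb [(1, w)] :: word \<Rightarrow> 'k) = {w}"
      by (auto simp: supp_def lincomb_Cons lincomb_Nil)
    then show ?thesis
      unfolding normalizable_def using True normal_words_eq_reduced rel_ideal.zero
      by (intro exI[of _ "lincomb [(1, w)]"]) auto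
  next
    case False
    then obtain u v and r :: "('k \<times> word) list" where r: "r \<in> rels" and w: "w = u @ lead_word r @ v"
      using not_reduced_lead_word by blast
    define rest where "rest = sandw u (filter (\<lambda>(e, x). x \<noteq> lead_word r) r) v"
    have lc: "lead_coeff r \<noteq> 0" using lead_coeff_nonzero[OF r] .
    have "normalizable (lincomb rest)"
    proof (rule normalizable_lincomb)
      fix e y assume "(e, y) \<in> set rest"
      then obtain x where "(e, x) \<in> set r" "x \<noteq> lead_word r" "y = u @ x @ v"
        by (auto simp: rest_def sandw_def)
      then have "word_code y < word_code w"
        using word_code_less_lead_word[OF r] word_code_append_mono_strict w by simp
      then show "normalizable (lincomb [(1, y)] :: word \<Rightarrow> 'k)" using less by blast
    qed
    moreover have "normalizable (lincomb (sandw u r v))"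
      using normalizable_ideal[OF sandw_in_rel_ideal[OF r]] .
    ultimately have "normalizable (\<lambda>x. 1 / lead_coeff r * lincomb (sandw u r v) x +
        (- 1 / lead_coeff r) * lincomb rest x)"
      using normalizable_lin by blast
    moreover have "lincomb (sandw u r v) x = lead_coeff r * lincomb [(1, w)] x + lincomb rest x" for x
      using lincomb_sandw_split_lead[of u r v x "lead_word r"] w
      by (simp add: rest_def lead_coeff_def lincomb_Cons lincomb_Nil)
    ultimately show ?thesis using lc by (simp add: field_simps)
  qed
qed

lemma normalizable_finite_supp:
  fixes f :: "word \<Rightarrow> 'k::field"
  assumes "finite (supp f)"
  shows "normalizable f"
proof -
  have "normalizable f" if "finite S" "supp f \<subseteq> S" for S and f :: "word \<Rightarrow> 'k"
    using that
  proof (induction S arbitrary: f rule: finite_induct)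
    case empty
    then have "f = (\<lambda>_. 0)" by (auto simp: supp_def)
    then show ?case using normalizable_ideal[OF rel_ideal.zero] by simp
  next
    case (insert x S)
    have "supp (f(x := 0)) \<subseteq> S" using insert.prems by (auto simp: supp_def)
    then have "normalizable (\<lambda>w. 1 * (f(x := 0)) w + f x * lincomb [(1, x)] w)"
      using insert.IH normalizable_word normalizable_lin by blast
    moreover have "(\<lambda>w. 1 * (f(x := 0)) w + f x * lincomb [(1, x)] w) = f"
      by (auto simp: fun_eq_iff lincomb_Cons lincomb_Nil)
    ultimately show ?case by simp
  qed
  then show ?thesis using assms by blast
qed

theorem mainTheorem12:
  shows "(\<forall>f :: word \<Rightarrow> 'k::field. finite (supp f) \<longrightarrow>
            (\<exists>g. finite (supp g) \<and> supp g \<subseteq> normal_words \<and>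
                 (\<lambda>w. f w - g w) \<in> (rel_ideal :: (word \<Rightarrow> 'k) set)))
       \<and> (\<forall>g :: word \<Rightarrow> 'k. finite (supp g) \<and> supp g \<subseteq> normal_words \<and>
            g \<in> rel_ideal \<longrightarrow> g = (\<lambda>_. 0))"
proof (intro conjI allI impI)
  fix f :: "word \<Rightarrow> 'k"
  assume "finite (supp f)"
  then show "\<exists>g. finite (supp g) \<and> supp g \<subseteq> normal_words \<and> (\<lambda>w. f w - g w) \<in> rel_ideal"
    using normalizable_finite_supp unfolding normalizable_def by blast
next
  fix g :: "word \<Rightarrow> 'k"
  assume g: "finite (supp g) \<and> supp g \<subseteq> normal_words \<and> g \<in> rel_ideal"
  then obtain N where "below N g" using rel_ideal_below by blast
  moreover have "\<forall>w. g w \<noteq> 0 \<longrightarrow> reduced w"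
    using g by (auto simp: supp_def normal_words_eq_reduced)
  ultimately show "g = (\<lambda>_. 0)" by (rule below_reduced_eq_zero)
qed

end
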